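(* Let $n\ge 3$ and consider the game with players $N=\{1,\dots,n\}$, strategy sets $[0,1]$ and payoffs $\pi_i(x)=x_i(1-X_N)$, $X_N=\sum_{j\in N}x_j$. Let $C\subset N$ be a coalition of cooperators with $|C|=m$, $1\le m\le n-1$, acting as a Stackelberg leader (PCLE as defined below). Then: (i) for any $x^C$ with $X_C=\sum_{i\in C}x_i<1$, the non-cooperators' game has the unique Nash equilibrium $x_j=\frac{1-X_C}{n-m+1}$ for all $j\in N\setminus C$; (ii) in every PCLE, $X_C=\tfrac12$ and each non-cooperator extracts $\frac{1}{2(n-m+1)}$, so $X_N=1-\frac{1}{2(n-m+1)}$; if cooperators split equally, each cooperator extracts $\frac{1}{2m}$ and the payoffs are $\pi^L_C(m)=\frac{1}{4m(n-m+1)}$ for cooperators and $\pi^L_{NC}(m)=\frac{1}{4(n-m+1)^2}$ for non-cooperators. (iii) Defining, via these formulas (with $\pi^L_C(n)=\tfrac{1}{4n}$ the symmetric socially optimal payoff), a coalition size $m\in\{2,\dots,n-1\}$ to be stable if $\pi^L_{NC}(m)\ge\pi^L_C(m+1)$ and $\pi^L_C(m)\ge\pi^L_{NC}(m-1)$, the size $m$ is stable if and only if $$\frac{m+1}{n-m+1}\ge\frac{n-m+1}{n-m}\qquad\text{and}\qquad\frac{n-m+2}{n-m+1}\ge\frac{m}{n-m+2}.$$ In particular, for $n=8$ the coalition size $m=5$ is stable.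
   Context: For a coalition $C\subset N$ of cooperators, given a joint choice $x^C\in[0,1]^C$, let $\mathrm{NE}(x^C)$ be the set of Nash equilibria of the game among $N\setminus C$ with payoffs $x^{N\setminus C}\mapsto\pi_j(x^{N\setminus C},x^C)$. Let $\tilde\pi(x^C)=\min_{x^{N\setminus C}\in\mathrm{NE}(x^C)}\sum_{i\in C}\pi_i(x^{N\setminus C},x^C)$. A partial cooperative leadership equilibrium (PCLE) is a profile $(x^{N\setminus C}_*,x^C_* )$ with $x^C_*$ maximizing $\tilde\pi$ over $[0,1]^C$ and $x^{N\setminus C}_*$ minimizing $\sum_{i\in C}\pi_i(\cdot,x^C_* )$ over $\mathrm{NE}(x^C_* )$. *)

theory Defs
  imports "HOL-Library.FuncSet" Complex_Main
begin

definition players :: "nat \<Rightarrow> nat set" where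
  "players n = {1..n}"

definition strategies :: "nat set \<Rightarrow> (nat \<Rightarrow> real) set" where
  "strategies S = S \<rightarrow>\<^sub>E {0..1}"

definition combine :: "nat set \<Rightarrow> (nat \<Rightarrow> real) \<Rightarrow> (nat \<Rightarrow> real) \<Rightarrow> (nat \<Rightarrow> real)" where
  "combine C y z = (\<lambda>i. if i \<in> C then y i else z i)"

definition payoff :: "nat \<Rightarrow> nat \<Rightarrow> (nat \<Rightarrow> real) \<Rightarrow> real" where
  "payoff n i x = x i * (1 - (\<Sum>j\<in>players n. x j))"

definition NE :: "nat \<Rightarrow> nat set \<Rightarrow> (nat \<Rightarrow> real) \<Rightarrow> (nat \<Rightarrow> real) set" where
  "NE n C y = {z \<in> strategies (players n - C).
     \<forall>j \<in> players n - C. \<forall>t \<in> {0..1}.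
       payoff n j (combine C y (z(j := t))) \<le> payoff n j (combine C y z)}"

definition coal_payoff :: "nat \<Rightarrow> nat set \<Rightarrow> (nat \<Rightarrow> real) \<Rightarrow> (nat \<Rightarrow> real) \<Rightarrow> real" where
  "coal_payoff n C y z = (\<Sum>i\<in>C. payoff n i (combine C y z))"

definition tilde_pi :: "nat \<Rightarrow> nat set \<Rightarrow> (nat \<Rightarrow> real) \<Rightarrow> real" where
  "tilde_pi n C y = (INF z \<in> NE n C y. coal_payoff n C y z)"

definition PCLE :: "nat \<Rightarrow> nat set \<Rightarrow> (nat \<Rightarrow> real) \<Rightarrow> (nat \<Rightarrow> real) \<Rightarrow> bool" where
  "PCLE n C y z \<longleftrightarrow>
     y \<in> strategies C \<and> (\<forall>y' \<in> strategies C. tilde_pi n C y' \<le> tilde_pi n C y) \<and>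
     z \<in> NE n C y \<and> (\<forall>z' \<in> NE n C y. coal_payoff n C y z \<le> coal_payoff n C y z')"

definition piL_C :: "nat \<Rightarrow> nat \<Rightarrow> real" where
  "piL_C n m = 1 / (4 * real m * (real n - real m + 1))"

definition piL_NC :: "nat \<Rightarrow> nat \<Rightarrow> real" where
  "piL_NC n m = 1 / (4 * (real n - real m + 1)^2)"

definition stable :: "nat \<Rightarrow> nat \<Rightarrow> bool" where
  "stable n m \<longleftrightarrow> 2 \<le> m \<and> m \<le> n - 1 \<and>
     piL_NC n m \<ge> piL_C n (m + 1) \<and> piL_C n m \<ge> piL_NC n (m - 1)"

end

theory Submission
  imports Defs
begin

text \<open>Against a fixed total extraction X of the coalition, non-cooperator j faces the
  concave objective t (b - t) with b = 1 - X - (others' total), so its best response is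
  max 0 (b/2); the symmetric fixed point is the unique equilibrium, with every
  non-cooperator extracting (1 - X)/(d + 1) for d non-cooperators. The coalition's total
  payoff is then X (1 - X)/(d + 1), a parabola maximised exactly at X = 1/2. The stability
  criteria are the two inequalities between the closed-form payoffs, cleared of
  denominators.\<close>

lemma quadratic_argmax_unit_interval:
  fixes b u :: real
  assumes "b \<le> 2" and "0 \<le> u" and "u \<le> 1"
  shows "(\<forall>t\<in>{0..1}. t * (b - t) \<le> u * (b - u)) \<longleftrightarrow> u = max 0 (b / 2)"
proof
  assume max: "\<forall>t\<in>{0..1}. t * (b - t) \<le> u * (b - u)"
  show "u = max 0 (b / 2)"
  proof (cases "b \<le> 0")
    case True
    have "0 \<le> u * (b - u)" using max[rule_format, of 0] by simp
    moreover have "u * (b - u) \<le> 0" using True assms by (simp add: mult_nonneg_nonpos)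
    ultimately have "u = 0 \<or> b = u" by simp
    then show ?thesis using True assms by auto
  next
    case False
    have "(b / 2) * (b - b / 2) \<le> u * (b - u)" using max[rule_format, of "b / 2"] False assms by simp
    then have "(u - b / 2)^2 \<le> 0" by (simp add: power2_eq_square algebra_simps)
    then show ?thesis using False by simp
  qed
next
  assume u: "u = max 0 (b / 2)"
  show "\<forall>t\<in>{0..1}. t * (b - t) \<le> u * (b - u)"
  proof
    fix t :: real
    assume t: "t \<in> {0..1}"
    show "t * (b - t) \<le> u * (b - u)"
    proof (cases "b \<le> 0")
      case True
      then show ?thesis using t u by (simp add: mult_nonneg_nonpos)
    next
      case False
      then have "b = 2 * u" using u by simp
      moreover have "0 \<le> (t - u)^2" by simp
      ultimately show ?thesis by (simp add: power2_eq_square algebra_simps)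
    qed
  qed
qed

lemma leader_value_bound:
  fixes X d :: real
  assumes X: "0 \<le> X" and d: "0 \<le> d"
  defines "V \<equiv> X * (1 - X - d * (max 0 (1 - X) / (d + 1)))"
  shows "V \<le> 1 / (4 * (d + 1))" and "V = 1 / (4 * (d + 1)) \<longleftrightarrow> X = 1 / 2"
proof -
  have "V \<le> 1 / (4 * (d + 1)) \<and> (V = 1 / (4 * (d + 1)) \<longleftrightarrow> X = 1 / 2)"
  proof (cases "X < 1")
    case True
    have "V = X * (1 - X) / (d + 1)" using True d by (simp add: V_def field_simps)
    then have gap: "1 / (4 * (d + 1)) - V = (X - 1 / 2)^2 / (d + 1)"
      using d by (simp add: field_simps power2_eq_square)
    have "0 \<le> (X - 1 / 2)^2 / (d + 1)" using d by simp
    moreover have "(X - 1 / 2)^2 / (d + 1) = 0 \<longleftrightarrow> X = 1 / 2" using d by simp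
    ultimately show ?thesis using gap by (smt (verit))
  next
    case False
    then have "V \<le> 0" using X by (simp add: V_def mult_nonneg_nonpos)
    moreover have "0 < 1 / (4 * (d + 1))" using d by simp
    ultimately have "V < 1 / (4 * (d + 1))" by linarith
    moreover have "X \<noteq> 1 / 2" using False by auto
    ultimately show ?thesis by auto
  qed
  then show "V \<le> 1 / (4 * (d + 1))" and "V = 1 / (4 * (d + 1)) \<longleftrightarrow> X = 1 / 2" by auto
qed

lemma best_response_fixed_point:
  fixes u a S :: real
  assumes "u = max 0 ((a - S + u) / 2)"
  shows "u = max 0 (a - S)"
  using assms by (auto simp: max_def split: if_splits)

lemma share_fixed_point:
  fixes a S d :: real
  assumes "0 \<le> d" and "S = d * max 0 (a - S)"
  shows "max 0 (a - S) = max 0 a / (d + 1)"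
proof (cases "a - S > 0")
  case True
  then have "a = (a - S) * (d + 1)" using assms by (simp add: algebra_simps)
  moreover have "0 < (a - S) * (d + 1)" using True assms(1) by simp
  ultimately show ?thesis using True assms(1) by (simp add: field_simps)
qed (use assms in simp)

lemma share_best_response:
  fixes a d :: real
  assumes "1 \<le> d"
  shows "max 0 a / (d + 1) = max 0 ((a - (d - 1) * (max 0 a / (d + 1))) / 2)"
proof (cases "a > 0")
  case True
  then have "max 0 a = a" by simp
  moreover have "(a - (d - 1) * (a / (d + 1))) / 2 = a / (d + 1)" using assms by (simp add: field_simps)
  ultimately show ?thesis using True assms by (simp add: field_simps)
qed simp

lemma equal_values_eq_sum_div_card:
  fixes y :: "'a \<Rightarrow> real"
  assumes "finite A" and "\<forall>i\<in>A. \<forall>i'\<in>A. y i = y i'" and "i \<in> A"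
  shows "y i = sum y A / real (card A)"
proof -
  have "sum y A = sum (\<lambda>_. y i) A" using assms(2,3) by (intro sum.cong) blast+
  then have "sum y A = real (card A) * y i" by simp
  moreover have "card A \<noteq> 0" using assms(1,3) by auto
  ultimately show ?thesis by simp
qed

lemma strategies_range: "y \<in> strategies A \<Longrightarrow> i \<in> A \<Longrightarrow> 0 \<le> y i \<and> y i \<le> 1"
  by (auto simp: strategies_def)

lemma strategies_sum_nonneg: "y \<in> strategies A \<Longrightarrow> B \<subseteq> A \<Longrightarrow> 0 \<le> sum y B"
  by (auto intro: sum_nonneg dest: strategies_range)

lemma sum_restrict_const: "sum (restrict (\<lambda>_. c) A) A = of_nat (card A) * c"
proof -
  have "sum (restrict (\<lambda>_. c) A) A = sum (\<lambda>_. c) A" by (rule sum.cong) auto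
  then show ?thesis by simp
qed

context
  fixes n :: nat and C :: "nat set"
  assumes C_players: "C \<subseteq> players n"
begin

abbreviation others :: "nat set" where
  "others \<equiv> players n - C"

lemma finite_coalition: "finite C"
  using C_players finite_subset by (auto simp: players_def)

lemma finite_others: "finite others"
  by (simp add: players_def)

lemma sum_combine: "sum (combine C y z) (players n) = sum y C + sum z others"
proof -
  have "sum (combine C y z) (players n) = sum (combine C y z) others + sum (combine C y z) C"
    using sum.subset_diff[OF C_players] by (simp add: players_def)
  also have "sum (combine C y z) others = sum z others"
    by (rule sum.cong) (auto simp: combine_def)
  also have "sum (combine C y z) C = sum y C"
    by (rule sum.cong) (auto simp: combine_def)
  finally show ?thesis by simp
qed

lemma payoff_update:
  assumes j: "j \<in> others"
  shows "payoff n j (combine C y (z(j := t))) = t * ((1 - sum y C - sum z (others - {j})) - t)"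
proof -
  have "sum (z(j := t)) (others - {j}) = sum z (others - {j})"
    by (rule sum.cong) auto
  then have "sum (z(j := t)) others = t + sum z (others - {j})"
    using sum.remove[OF finite_others j, of "z(j := t)"] by simp
  then show ?thesis
    unfolding payoff_def sum_combine using j by (simp add: combine_def algebra_simps)
qed

lemma NE_iff_best_responses:
  assumes y: "y \<in> strategies C"
  shows "z \<in> NE n C y \<longleftrightarrow> z \<in> strategies others \<and>
    (\<forall>j\<in>others. z j = max 0 ((1 - sum y C - sum z (others - {j})) / 2))"
proof -
  have "(\<forall>t\<in>{0..1}. payoff n j (combine C y (z(j := t))) \<le> payoff n j (combine C y z))
      \<longleftrightarrow> z j = max 0 ((1 - sum y C - sum z (others - {j})) / 2)"
    if z: "z \<in> strategies others" and j: "j \<in> others" for z j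
  proof -
    have "payoff n j (combine C y z) = z j * ((1 - sum y C - sum z (others - {j})) - z j)"
      using payoff_update[OF j, of y z "z j"] by simp
    moreover have "0 \<le> sum y C" and "0 \<le> sum z (others - {j})"
      using y z by (auto intro: strategies_sum_nonneg)
    ultimately show ?thesis
      using quadratic_argmax_unit_interval strategies_range[OF z j]
      by (simp add: payoff_update[OF j])
  qed
  then show ?thesis unfolding NE_def by blast
qed

lemma NE_member_eq_share:
  assumes y: "y \<in> strategies C" and z: "z \<in> NE n C y" and j: "j \<in> others"
  shows "z j = max 0 (1 - sum y C) / (real (card others) + 1)"
proof -
  define a where "a = 1 - sum y C"
  define S where "S = sum z others"
  have z_eq: "z i = max 0 (a - S)" if i: "i \<in> others" for i
  proof -
    have "z i = max 0 ((a - sum z (others - {i})) / 2)"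
      using z i unfolding NE_iff_best_responses[OF y] a_def by blast
    moreover have "sum z (others - {i}) = S - z i"
      using sum.remove[OF finite_others i, of z] by (simp add: S_def)
    ultimately have "z i = max 0 ((a - S + z i) / 2)" by (simp add: algebra_simps)
    then show ?thesis by (rule best_response_fixed_point)
  qed
  have "sum z others = sum (\<lambda>_. max 0 (a - S)) others"
    by (rule sum.cong) (simp_all add: z_eq)
  then have "S = real (card others) * max 0 (a - S)"
    by (simp add: S_def[symmetric])
  then have "max 0 (a - S) = max 0 a / (real (card others) + 1)"
    by (intro share_fixed_point) simp_all
  then show ?thesis using z_eq[OF j] by (simp add: a_def)
qed

lemma share_mem_NE:
  assumes y: "y \<in> strategies C"
  shows "restrict (\<lambda>_. max 0 (1 - sum y C) / (real (card others) + 1)) others \<in> NE n C y"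
    (is "?z \<in> _")
proof -
  define d where "d = real (card others)"
  define c where "c = max 0 (1 - sum y C) / (d + 1)"
  have "0 \<le> sum y C" using y by (rule strategies_sum_nonneg) simp
  then have "max 0 (1 - sum y C) \<le> d + 1" by (simp add: d_def)
  then have c_range: "0 \<le> c" "c \<le> 1" by (simp_all add: c_def d_def)
  have best: "?z j = max 0 ((1 - sum y C - sum ?z (others - {j})) / 2)" if j: "j \<in> others" for j
  proof -
    have "card others \<ge> 1" using j finite_others by (auto simp: Suc_le_eq card_gt_0_iff)
    then have "d \<ge> 1" by (simp add: d_def)
    have "sum ?z (others - {j}) = sum (\<lambda>_. c) (others - {j})"
      by (rule sum.cong) (auto simp: c_def d_def)
    also have "\<dots> = (d - 1) * c"
      using j finite_others \<open>card others \<ge> 1\<close> by (simp add: d_def of_nat_diff)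
    finally have "sum ?z (others - {j}) = (d - 1) * c" .
    moreover have "?z j = c" using j by (simp add: c_def d_def)
    ultimately show ?thesis
      using share_best_response[OF \<open>d \<ge> 1\<close>, of "1 - sum y C"] by (simp only: c_def)
  qed
  moreover have "?z \<in> strategies others"
    using c_range by (simp add: strategies_def c_def d_def)
  ultimately show ?thesis by (simp only: NE_iff_best_responses[OF y]) blast
qed

theorem NE_eq_share:
  assumes y: "y \<in> strategies C"
  shows "NE n C y = {restrict (\<lambda>_. max 0 (1 - sum y C) / (real (card others) + 1)) others}"
proof -
  have "z = restrict (\<lambda>_. max 0 (1 - sum y C) / (real (card others) + 1)) others"
    if z: "z \<in> NE n C y" for z
  proof (rule PiE_ext)
    show "z \<in> others \<rightarrow>\<^sub>E {0..1}"
      using z by (simp add: NE_iff_best_responses[OF y] strategies_def)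
    show "restrict (\<lambda>_. max 0 (1 - sum y C) / (real (card others) + 1)) others \<in> others \<rightarrow>\<^sub>E {0..1}"
      using share_mem_NE[OF y] by (simp add: NE_iff_best_responses[OF y] strategies_def)
  qed (simp add: NE_member_eq_share[OF y z])
  then show ?thesis using share_mem_NE[OF y] by blast
qed

lemma coal_payoff_eq: "coal_payoff n C y z = sum y C * (1 - sum y C - sum z others)"
proof -
  have "coal_payoff n C y z = (\<Sum>i\<in>C. y i * (1 - (sum y C + sum z others)))"
    unfolding coal_payoff_def payoff_def sum_combine by (rule sum.cong) (auto simp: combine_def)
  also have "\<dots> = sum y C * (1 - (sum y C + sum z others))"
    by (rule sum_distrib_right[symmetric])
  finally show ?thesis by simp
qed

lemma tilde_pi_eq:
  assumes y: "y \<in> strategies C"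
  shows "tilde_pi n C y = sum y C *
    (1 - sum y C - real (card others) * (max 0 (1 - sum y C) / (real (card others) + 1)))"
proof -
  define c where "c = max 0 (1 - sum y C) / (real (card others) + 1)"
  show ?thesis
    by (simp add: tilde_pi_def NE_eq_share[OF y] coal_payoff_eq sum_restrict_const c_def[symmetric])
qed

lemma tilde_pi_le:
  assumes "y \<in> strategies C"
  shows "tilde_pi n C y \<le> 1 / (4 * (real (card others) + 1))"
  unfolding tilde_pi_eq[OF assms]
  by (rule leader_value_bound) (use assms in \<open>auto intro: strategies_sum_nonneg\<close>)

lemma tilde_pi_eq_max_iff:
  assumes "y \<in> strategies C"
  shows "tilde_pi n C y = 1 / (4 * (real (card others) + 1)) \<longleftrightarrow> sum y C = 1 / 2"
  unfolding tilde_pi_eq[OF assms]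
  by (rule leader_value_bound) (use assms in \<open>auto intro: strategies_sum_nonneg\<close>)

lemma equal_split:
  assumes "C \<noteq> {}"
  shows "restrict (\<lambda>_. 1 / (2 * real (card C))) C \<in> strategies C"
    and "sum (restrict (\<lambda>_. 1 / (2 * real (card C))) C) C = 1 / 2"
proof -
  have "card C \<ge> 1" using assms finite_coalition by (simp add: Suc_le_eq card_gt_0_iff)
  then show "restrict (\<lambda>_. 1 / (2 * real (card C))) C \<in> strategies C"
    by (simp add: strategies_def field_simps)
  show "sum (restrict (\<lambda>_. 1 / (2 * real (card C))) C) C = 1 / 2"
    using \<open>card C \<ge> 1\<close> by (simp add: sum_restrict_const)
qed

theorem PCLE_iff:
  assumes "C \<noteq> {}"
  shows "PCLE n C y z \<longleftrightarrow> y \<in> strategies C \<and> sum y C = 1 / 2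
    \<and> z = restrict (\<lambda>_. 1 / (2 * (real (card others) + 1))) others"
proof -
  define M where "M = 1 / (4 * (real (card others) + 1))"
  have optimal: "(\<forall>y'\<in>strategies C. tilde_pi n C y' \<le> tilde_pi n C y) \<longleftrightarrow> sum y C = 1 / 2"
    if y: "y \<in> strategies C" for y
  proof
    assume "\<forall>y'\<in>strategies C. tilde_pi n C y' \<le> tilde_pi n C y"
    then have "M \<le> tilde_pi n C y"
      using equal_split[OF assms] tilde_pi_eq_max_iff by (fastforce simp: M_def)
    then show "sum y C = 1 / 2"
      using tilde_pi_le[OF y] tilde_pi_eq_max_iff[OF y] by (simp add: M_def)
  qed (use tilde_pi_le tilde_pi_eq_max_iff[OF y] in auto)
  have "max 0 (1 - 1 / 2) / (real (card others) + 1) = 1 / (2 * (real (card others) + 1))"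
    by simp
  then have "NE n C y = {restrict (\<lambda>_. 1 / (2 * (real (card others) + 1))) others}"
    if "y \<in> strategies C" and "sum y C = 1 / 2" for y
    using NE_eq_share[OF that(1)] that(2) by simp
  then show ?thesis
    unfolding PCLE_def using optimal by auto
qed

lemma real_card_others: "real (card others) = real n - real (card C)"
proof -
  have "card C \<le> n" using card_mono[OF _ C_players] by (simp add: players_def)
  then show ?thesis
    using card_Diff_subset[OF finite_coalition C_players] by (simp add: players_def of_nat_diff)
qed

corollary NE_unique:
  assumes "y \<in> strategies C" and "sum y C < 1"
  shows "NE n C y = {restrict (\<lambda>j. (1 - sum y C) / (real n - real (card C) + 1)) others}"
  using NE_eq_share[OF assms(1)] assms(2) by (simp add: real_card_others)

lemma PCLE_outcome_share:
  assumes "C \<noteq> {}" and "PCLE n C y z"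
  defines "share \<equiv> 1 / (2 * (real (card others) + 1))"
  shows "sum y C = 1 / 2"
    and "\<forall>j\<in>others. z j = share"
    and "sum (combine C y z) (players n) = 1 - share"
    and "\<forall>i\<in>C. payoff n i (combine C y z) = y i * share"
    and "\<forall>j\<in>others. payoff n j (combine C y z) = share^2"
proof -
  show y: "sum y C = 1 / 2" and z: "\<forall>j\<in>others. z j = share"
    using assms by (simp_all add: PCLE_iff)
  have "sum z others = real (card others) * share"
    using assms by (simp add: PCLE_iff sum_restrict_const)
  then show total: "sum (combine C y z) (players n) = 1 - share"
    by (simp add: sum_combine y share_def field_simps)
  show "\<forall>i\<in>C. payoff n i (combine C y z) = y i * share"
    using total by (simp add: payoff_def combine_def)
  show "\<forall>j\<in>others. payoff n j (combine C y z) = share^2"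
    using total z by (simp add: payoff_def combine_def power2_eq_square)
qed

theorem PCLE_outcome:
  assumes "C \<noteq> {}" and P: "PCLE n C y z"
  shows "sum y C = 1 / 2
    \<and> (\<forall>j\<in>others. z j = 1 / (2 * (real n - real (card C) + 1)))
    \<and> sum (combine C y z) (players n) = 1 - 1 / (2 * (real n - real (card C) + 1))
    \<and> ((\<forall>i\<in>C. \<forall>i'\<in>C. y i = y i') \<longrightarrow>
         (\<forall>i\<in>C. y i = 1 / (2 * real (card C)) \<and> payoff n i (combine C y z) = piL_C n (card C))
       \<and> (\<forall>j\<in>others. payoff n j (combine C y z) = piL_NC n (card C)))"
proof -
  define share where "share = 1 / (2 * (real n - real (card C) + 1))"
  have "1 / (2 * (real (card others) + 1)) = share" by (simp add: share_def real_card_others)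
  note outcome = PCLE_outcome_share[OF assms, unfolded this]
  have cooperators: "y i = 1 / (2 * real (card C)) \<and> payoff n i (combine C y z) = piL_C n (card C)"
    if "\<forall>i\<in>C. \<forall>i'\<in>C. y i = y i'" and "i \<in> C" for i
  proof -
    have "y i = 1 / (2 * real (card C))"
      using equal_values_eq_sum_div_card[OF finite_coalition that] outcome(1) by simp
    moreover have "piL_C n (card C) = 1 / (2 * real (card C)) * share"
      by (simp add: piL_C_def share_def)
    ultimately show ?thesis using outcome(4) \<open>i \<in> C\<close> by simp
  qed
  have "piL_NC n (card C) = share^2" by (simp add: piL_NC_def share_def power2_eq_square algebra_simps)
  then have "\<forall>j\<in>others. payoff n j (combine C y z) = piL_NC n (card C)"
    using outcome(5) by simp
  then show ?thesis
    using outcome(1-3) cooperators unfolding share_def by blast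
qed

lemma PCLE_exists_equal_split:
  assumes "C \<noteq> {}"
  shows "\<exists>y z. PCLE n C y z \<and> (\<forall>i\<in>C. \<forall>i'\<in>C. y i = y i')"
proof -
  have "PCLE n C (restrict (\<lambda>_. 1 / (2 * real (card C))) C)
      (restrict (\<lambda>_. 1 / (2 * (real (card others) + 1))) others)"
    using PCLE_iff[OF assms] equal_split[OF assms] by simp
  then show ?thesis by fastforce
qed

end

lemma one_div_le_one_div_iff:
  fixes a b :: real
  assumes "0 < a" and "0 < b"
  shows "1 / a \<le> 1 / b \<longleftrightarrow> b \<le> a"
  using inverse_le_iff_le[OF assms] by (simp add: inverse_eq_divide)

lemma stable_iff:
  fixes n k :: nat
  assumes "k \<in> {2..n - 1}"
  shows "stable n k \<longleftrightarrow>
        (real k + 1) / (real n - real k + 1) \<ge> (real n - real k + 1) / (real n - real k)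
      \<and> (real n - real k + 2) / (real n - real k + 1) \<ge> real k / (real n - real k + 2)"
proof -
  define p where "p = real n - real k"
  have p: "1 \<le> p" and k: "0 < real k" using assms by (auto simp: p_def)
  have payoffs: "piL_NC n k = 1 / (4 * (p + 1)^2)" "piL_C n (k + 1) = 1 / (4 * ((real k + 1) * p))"
      "piL_C n k = 1 / (4 * (real k * (p + 1)))" "piL_NC n (k - 1) = 1 / (4 * (p + 2)^2)"
    using assms by (simp_all add: piL_NC_def piL_C_def p_def of_nat_diff add.commute)
  have "piL_NC n k \<ge> piL_C n (k + 1) \<longleftrightarrow> (p + 1)^2 \<le> (real k + 1) * p"
    using p k by (simp only: payoffs, subst one_div_le_one_div_iff) auto
  also have "\<dots> \<longleftrightarrow> (real k + 1) / (p + 1) \<ge> (p + 1) / p"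
    using p by (simp add: field_simps power2_eq_square)
  finally have upward: "piL_NC n k \<ge> piL_C n (k + 1) \<longleftrightarrow> (real k + 1) / (p + 1) \<ge> (p + 1) / p" .
  have "piL_C n k \<ge> piL_NC n (k - 1) \<longleftrightarrow> real k * (p + 1) \<le> (p + 2)^2"
    using p k by (simp only: payoffs, subst one_div_le_one_div_iff) auto
  also have "\<dots> \<longleftrightarrow> (p + 2) / (p + 1) \<ge> real k / (p + 2)"
    using p by (simp add: field_simps power2_eq_square)
  finally have downward: "piL_C n k \<ge> piL_NC n (k - 1) \<longleftrightarrow> (p + 2) / (p + 1) \<ge> real k / (p + 2)" .
  show ?thesis
    using assms upward downward by (simp add: stable_def p_def)
qed

lemma stable_8_5: "stable 8 5"
  by (simp add: stable_def piL_C_def piL_NC_def)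

theorem mainTheorem11:
  fixes n m :: nat and C :: "nat set"
  assumes "n \<ge> 3" and "C \<subseteq> players n" and "card C = m" and "1 \<le> m" and "m \<le> n - 1"
  shows
    "(\<forall>y \<in> strategies C. (\<Sum>i\<in>C. y i) < 1 \<longrightarrow>
        NE n C y = {restrict (\<lambda>j. (1 - (\<Sum>i\<in>C. y i)) / (real n - real m + 1)) (players n - C)})
   \<and> (\<forall>y z. PCLE n C y z \<longrightarrow>
        (\<Sum>i\<in>C. y i) = 1/2
      \<and> (\<forall>j \<in> players n - C. z j = 1 / (2 * (real n - real m + 1)))
      \<and> (\<Sum>j\<in>players n. combine C y z j) = 1 - 1 / (2 * (real n - real m + 1))
      \<and> ((\<forall>i\<in>C. \<forall>i'\<in>C. y i = y i') \<longrightarrow>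
           (\<forall>i\<in>C. y i = 1 / (2 * real m) \<and> payoff n i (combine C y z) = piL_C n m)
         \<and> (\<forall>j \<in> players n - C. payoff n j (combine C y z) = piL_NC n m)))
   \<and> (\<exists>y z. PCLE n C y z \<and> (\<forall>i\<in>C. \<forall>i'\<in>C. y i = y i'))
   \<and> (\<forall>k \<in> {2..n-1}. stable n k \<longleftrightarrow>
        (real k + 1) / (real n - real k + 1) \<ge> (real n - real k + 1) / (real n - real k)
      \<and> (real n - real k + 2) / (real n - real k + 1) \<ge> real k / (real n - real k + 2))
   \<and> stable 8 5"
proof -
  have "C \<noteq> {}" using assms(3,4) by auto
  then show ?thesis
    unfolding assms(3)[symmetric]
    using NE_unique[OF assms(2)] PCLE_outcome[OF assms(2)] PCLE_exists_equal_split[OF assms(2)]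
      stable_iff stable_8_5
    by blast
qed

end
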